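(* Let $N\ge3$ and $p>p_{\rm S}$. Suppose $y^*$ is a solution, defined on $(-\infty,T]$ for some $T\in\mathbb{R}$, of $$y''+\alpha y'-y+y^p+B_0(t)y^p+B_1(t)y=0,\qquad y(t)\to1\ \text{as }t\to-\infty.$$ Then $y^*(t)=1+O(e^{2mt})$ as $t\to-\infty$.
   Context: $p_{\rm S}=\frac{N+2}{N-2}$, $\mu=\frac{2}{p-1}$, $a=\{\mu(N-2-\mu)\}^{\mu/2}$, $m=a^{-(p-1)/2}$, $\alpha=m(N-2-2\mu)$, $q=\frac{N-2}{2}(p-p_{\rm S})$, $B_0(t)=(1+e^{2mt})^q-1$, $B_1(t)=\frac{N(N-2)e^{2mt}}{(1+e^{2mt})^2}$. *)

theory Defs
  imports "HOL-Analysis.Analysis" "HOL-Library.Landau_Symbols"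
begin

definition pS :: "nat \<Rightarrow> real" where
  "pS N = (real N + 2) / (real N - 2)"

definition mu :: "real \<Rightarrow> real" where
  "mu p = 2 / (p - 1)"

definition aconst :: "nat \<Rightarrow> real \<Rightarrow> real" where
  "aconst N p = (mu p * (real N - 2 - mu p)) powr (mu p / 2)"

definition mconst :: "nat \<Rightarrow> real \<Rightarrow> real" where
  "mconst N p = aconst N p powr (- (p - 1) / 2)"

definition alpha :: "nat \<Rightarrow> real \<Rightarrow> real" where
  "alpha N p = mconst N p * (real N - 2 - 2 * mu p)"

definition qconst :: "nat \<Rightarrow> real \<Rightarrow> real" where
  "qconst N p = (real N - 2) / 2 * (p - pS N)"

definition B0 :: "nat \<Rightarrow> real \<Rightarrow> real \<Rightarrow> real" where
  "B0 N p t = (1 + exp (2 * mconst N p * t)) powr (qconst N p) - 1"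

definition B1 :: "nat \<Rightarrow> real \<Rightarrow> real \<Rightarrow> real" where
  "B1 N p t = real N * (real N - 2) * exp (2 * mconst N p * t)
              / (1 + exp (2 * mconst N p * t))^2"

end

theory Submission
  imports Defs "HOL-Real_Asymp.Real_Asymp"
begin

text \<open>
  Put \<open>z = y - 1\<close>. The equation reads \<open>z'' + \<alpha> z' + (p - 1) z + r + f = 0\<close> with
  \<open>r = y^p - 1 - p z = o(z)\<close> and \<open>f = B\<^sub>0 y^p + B\<^sub>1 y = O(exp (2 m t))\<close>, and \<open>\<alpha> > 0\<close>, \<open>p > 1\<close>
  because \<open>p > p\<^sub>S\<close>. The quadratic form \<open>V = z'^2 + \<alpha> z z' + (p - 1 + \<alpha>^2/2) z^2\<close> dominates
  \<open>(p - 1) z^2\<close> and near \<open>-\<infinity>\<close> satisfies \<open>V' \<le> -\<delta> V + K exp (4 m t)\<close>. Hence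
  \<open>exp (\<delta> t) V - K/(\<delta> + 4 m) exp ((\<delta> + 4 m) t)\<close> is nonincreasing; as \<open>V\<close> stays bounded along a
  sequence tending to \<open>-\<infinity>\<close> (mean value theorem), this function is \<open>\<le> 0\<close>, so
  \<open>V = O(exp (4 m t))\<close> and \<open>z = O(exp (2 m t))\<close>.
\<close>

lemma frequently_at_bot_iff: "(\<exists>\<^sub>F t in at_bot. P t) \<longleftrightarrow> (\<forall>s::real. \<exists>t\<le>s. P t)"
  unfolding frequently_def eventually_at_bot_linorder by auto

lemma frequently_small_derivative:
  fixes y y' :: "real \<Rightarrow> real"
  assumes "(y \<longlongrightarrow> L) at_bot" "\<forall>\<^sub>F t in at_bot. (y has_real_derivative y' t) (at t)" "\<epsilon> > 0"
  shows "\<exists>\<^sub>F t in at_bot. \<bar>y' t\<bar> \<le> \<epsilon>"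
proof -
  have "\<forall>\<^sub>F t in at_bot. dist (y t) L < \<epsilon> / 2"
    using tendstoD[OF assms(1), of "\<epsilon> / 2"] assms(3) by simp
  with assms(2) have "\<forall>\<^sub>F t in at_bot. (y has_real_derivative y' t) (at t) \<and> \<bar>y t - L\<bar> < \<epsilon> / 2"
    by eventually_elim (simp add: dist_real_def)
  then obtain t0 where t0: "\<And>t. t \<le> t0 \<Longrightarrow>
      (y has_real_derivative y' t) (at t) \<and> \<bar>y t - L\<bar> < \<epsilon> / 2"
    unfolding eventually_at_bot_linorder by blast
  show ?thesis
    unfolding frequently_at_bot_iff
  proof
    fix s
    define u where "u = min s t0"
    have "u \<le> t0" "u \<le> s" unfolding u_def by simp_all
    then obtain \<xi> where \<xi>: "u - 1 < \<xi>" "\<xi> < u" "y u - y (u - 1) = (u - (u - 1)) * y' \<xi>"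
      using MVT2[of "u - 1" u y y'] t0 by force
    have "\<bar>y u - L\<bar> < \<epsilon> / 2" "\<bar>y (u - 1) - L\<bar> < \<epsilon> / 2"
      using t0 \<open>u \<le> t0\<close> by simp_all
    moreover have "y' \<xi> = (y u - L) - (y (u - 1) - L)" using \<xi>(3) by simp
    ultimately have "\<bar>y' \<xi>\<bar> \<le> \<epsilon>" by linarith
    with \<xi>(2) \<open>u \<le> s\<close> show "\<exists>t\<le>s. \<bar>y' t\<bar> \<le> \<epsilon>" by (intro exI[of _ \<xi>]) simp
  qed
qed

lemma eventually_has_real_derivative_at:
  assumes "\<And>t. t \<le> T \<Longrightarrow> (f has_real_derivative f' t) (at t within {..T})"
  shows "\<forall>\<^sub>F t in at_bot. (f has_real_derivative f' t) (at t)"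
  unfolding eventually_at_bot_linorder
proof (intro exI allI impI)
  fix t :: real assume "t \<le> T - 1"
  then have "at t within {..T} = at t" by (intro at_within_interior) simp
  with assms[of t] \<open>t \<le> T - 1\<close> show "(f has_real_derivative f' t) (at t)" by simp
qed

lemma convergent_bigo_1:
  fixes f :: "'a \<Rightarrow> real"
  assumes "(f \<longlongrightarrow> c) F"
  shows "f \<in> O[F](\<lambda>_. 1)"
  using assms by (intro bigoI_tendsto[where c = c]) simp_all

lemma powr_linearization_smallo:
  fixes y :: "'a \<Rightarrow> real"
  assumes "(y \<longlongrightarrow> 1) F"
  shows "(\<lambda>x. y x powr p - 1 - p * (y x - 1)) \<in> o[F](\<lambda>x. y x - 1)"
proof (rule landau_o.smallI)
  fix c :: real assume "c > 0"
  have "(\<lambda>u::real. u powr p - 1 - p * (u - 1)) \<in> o[at 1](\<lambda>u. u - 1)"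
    by real_asymp
  then have "\<forall>\<^sub>F u in at 1. norm (u powr p - 1 - p * (u - 1)) \<le> c * norm (u - 1)"
    using \<open>c > 0\<close> by (rule landau_o.smallD)
  then have "\<forall>\<^sub>F u in nhds 1. norm (u powr p - 1 - p * (u - 1)) \<le> c * norm (u - 1)"
    unfolding eventually_at_filter by (rule eventually_mono) auto
  with assms show "\<forall>\<^sub>F x in F. norm (y x powr p - 1 - p * (y x - 1)) \<le> c * norm (y x - 1)"
    unfolding filterlim_iff by blast
qed

lemma differential_inequality_exp_bound:
  fixes V V' :: "real \<Rightarrow> real" and \<delta> l K D :: real
  assumes "\<delta> > 0" "\<delta> + l > 0" "K \<ge> 0"
    and "\<forall>\<^sub>F t in at_bot. (V has_real_derivative V' t) (at t) \<and> V' t \<le> - \<delta> * V t + K * exp (l * t)"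
    and "\<exists>\<^sub>F t in at_bot. V t \<le> D"
  shows "\<forall>\<^sub>F t in at_bot. V t \<le> K / (\<delta> + l) * exp (l * t)"
proof -
  obtain t0 where t0: "\<And>t. t \<le> t0 \<Longrightarrow>
      (V has_real_derivative V' t) (at t) \<and> V' t \<le> - \<delta> * V t + K * exp (l * t)"
    using assms(4) unfolding eventually_at_bot_linorder by blast
  define c where "c = K / (\<delta> + l)"
  define G where "G t = exp (\<delta> * t) * V t - c * exp ((\<delta> + l) * t)" for t
  have exp_split: "exp ((\<delta> + l) * t) = exp (\<delta> * t) * exp (l * t)" for t
    by (simp add: distrib_right exp_add)
  have cK: "c * (\<delta> + l) = K" unfolding c_def using assms(2) by simp
  have G_deriv: "(G has_real_derivative exp (\<delta> * t) * (\<delta> * V t + V' t - K * exp (l * t))) (at t)"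
    if "t \<le> t0" for t
  proof -
    have "(G has_real_derivative
        \<delta> * exp (\<delta> * t) * V t + exp (\<delta> * t) * V' t - c * ((\<delta> + l) * exp ((\<delta> + l) * t))) (at t)"
      unfolding G_def using t0[OF that] by (auto intro!: derivative_eq_intros)
    moreover have "c * ((\<delta> + l) * exp ((\<delta> + l) * t)) = exp (\<delta> * t) * (K * exp (l * t))"
      unfolding exp_split mult.assoc[symmetric] cK by (simp add: algebra_simps)
    ultimately show ?thesis by (simp add: algebra_simps)
  qed
  have G_antimono: "G t \<le> G s" if "s \<le> t" "t \<le> t0" for s t
  proof (rule DERIV_nonpos_imp_nonincreasing[OF that(1)])
    fix x assume "s \<le> x" "x \<le> t"
    with that have "x \<le> t0" by linarith
    with t0 have "\<delta> * V x + V' x - K * exp (l * x) \<le> 0" by fastforce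
    then have "exp (\<delta> * x) * (\<delta> * V x + V' x - K * exp (l * x)) \<le> 0"
      by (simp add: mult_nonneg_nonpos)
    with G_deriv \<open>x \<le> t0\<close> show "\<exists>y. DERIV G x :> y \<and> y \<le> 0" by blast
  qed
  have G_nonpos: "G t \<le> 0" if "t \<le> t0" for t
  proof (rule tendsto_lowerbound)
    show "((\<lambda>s. max D 0 * exp (\<delta> * s)) \<longlongrightarrow> 0) at_bot"
      using assms(1) by real_asymp
    show "\<forall>\<^sub>F s in at_bot. G t \<le> max D 0 * exp (\<delta> * s)"
      unfolding eventually_at_bot_linorder
    proof (intro exI allI impI)
      fix s assume "s \<le> t"
      obtain \<xi> where "\<xi> \<le> s" "V \<xi> \<le> D"
        using assms(5) unfolding frequently_at_bot_iff by blast
      have "G t \<le> G \<xi>" using G_antimono \<open>\<xi> \<le> s\<close> \<open>s \<le> t\<close> that by simp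
      also have "\<dots> \<le> exp (\<delta> * \<xi>) * V \<xi>"
        unfolding G_def c_def using assms(2,3) by simp
      also have "\<dots> \<le> exp (\<delta> * \<xi>) * max D 0" using \<open>V \<xi> \<le> D\<close> by simp
      also have "\<dots> \<le> exp (\<delta> * s) * max D 0"
        using \<open>\<xi> \<le> s\<close> assms(1) by (intro mult_right_mono) auto
      finally show "G t \<le> max D 0 * exp (\<delta> * s)" by (simp add: mult.commute)
    qed
  qed simp
  have "V t \<le> c * exp (l * t)" if "t \<le> t0" for t
    using G_nonpos[OF that] unfolding G_def exp_split by (simp add: mult.left_commute)
  then show ?thesis
    unfolding c_def eventually_at_bot_linorder by blast
qed

definition lyapunov :: "real \<Rightarrow> real \<Rightarrow> real \<Rightarrow> real \<Rightarrow> real" where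
  "lyapunov a b z w = w^2 + a * z * w + (b + a^2 / 2) * z^2"

lemma lyapunov_ge: "b * z^2 \<le> lyapunov a b z w"
proof -
  have "lyapunov a b z w = (w + a * z / 2)^2 + a^2 / 4 * z^2 + b * z^2"
    by (simp add: lyapunov_def power2_eq_square field_simps)
  moreover have "0 \<le> (w + a * z / 2)^2 + a^2 / 4 * z^2" by simp
  ultimately show ?thesis by linarith
qed

lemma lyapunov_le_quadratic:
  assumes "a \<ge> 0"
  shows "lyapunov a b z w \<le> (1 + a / 2) * w^2 + (b + a^2 / 2 + a / 2) * z^2"
proof -
  have "z * w \<le> (z^2 + w^2) / 2"
    using zero_le_power2[of "z - w"] unfolding power2_diff by simp
  then have "a * (z * w) \<le> a * ((z^2 + w^2) / 2)"
    using assms by (rule mult_left_mono)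
  then show ?thesis by (simp add: lyapunov_def algebra_simps)
qed

lemma lyapunov_le_of_abs_le_1:
  assumes "a \<ge> 0" "b \<ge> 0" "\<bar>z\<bar> \<le> 1" "\<bar>w\<bar> \<le> 1"
  shows "lyapunov a b z w \<le> 1 + a + b + a^2 / 2"
proof -
  have "w^2 \<le> 1" "z^2 \<le> 1"
    using assms(3,4) by (simp_all add: abs_square_le_1)
  then have "(1 + a / 2) * w^2 + (b + a^2 / 2 + a / 2) * z^2
      \<le> (1 + a / 2) * 1 + (b + a^2 / 2 + a / 2) * 1"
    using assms(1,2) by (intro add_mono mult_left_mono) auto
  with lyapunov_le_quadratic[OF assms(1), of b z w] show ?thesis by simp
qed

lemma lyapunov_has_real_derivative:
  assumes "(z has_real_derivative z' t) (at t)" "(z' has_real_derivative z'' t) (at t)"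
  shows "((\<lambda>s. lyapunov a b (z s) (z' s)) has_real_derivative
           - a * z' t^2 - a * b * z t^2 + (z'' t + a * z' t + b * z t) * (2 * z' t + a * z t)) (at t)"
  unfolding lyapunov_def
  by (rule derivative_eq_intros assms refl | simp add: algebra_simps power2_eq_square)+

lemma absorb_small_term:
  fixes a b \<eta> r z w :: real
  assumes "a > 0" "\<eta> \<ge> 0" "\<eta> \<le> a / 4" "\<eta> * (1 + a) \<le> a * b / 4" "\<bar>r\<bar> \<le> \<eta> * \<bar>z\<bar>"
  shows "- r * (2 * w + a * z) \<le> a / 4 * w^2 + a * b / 4 * z^2"
proof -
  have zw: "2 * \<bar>z\<bar> * \<bar>w\<bar> \<le> z^2 + w^2"
    using zero_le_power2[of "\<bar>z\<bar> - \<bar>w\<bar>"] unfolding power2_diff power2_abs by simp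
  have "\<bar>2 * w + a * z\<bar> \<le> 2 * \<bar>w\<bar> + a * \<bar>z\<bar>"
    using abs_triangle_ineq[of "2 * w" "a * z"] assms(1) by (simp add: abs_mult)
  then have "\<bar>r\<bar> * \<bar>2 * w + a * z\<bar> \<le> \<bar>r\<bar> * (2 * \<bar>w\<bar> + a * \<bar>z\<bar>)"
    by (simp add: mult_left_mono)
  then have "- r * (2 * w + a * z) \<le> \<bar>r\<bar> * (2 * \<bar>w\<bar> + a * \<bar>z\<bar>)"
    by (metis abs_ge_self abs_minus_cancel abs_mult minus_mult_left order_trans)
  also have "\<dots> \<le> \<eta> * \<bar>z\<bar> * (2 * \<bar>w\<bar> + a * \<bar>z\<bar>)"
    using assms(1,5) by (intro mult_right_mono) auto
  also have "\<dots> = \<eta> * (2 * \<bar>z\<bar> * \<bar>w\<bar>) + \<eta> * a * z^2"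
    by (simp add: algebra_simps power2_eq_square)
  also have "\<dots> \<le> \<eta> * (z^2 + w^2) + \<eta> * a * z^2"
    using zw assms(2) by (simp add: mult_left_mono)
  also have "\<dots> = \<eta> * w^2 + \<eta> * (1 + a) * z^2" by (simp add: algebra_simps)
  also have "\<dots> \<le> a / 4 * w^2 + a * b / 4 * z^2"
    using assms(3,4) by (intro add_mono mult_right_mono) auto
  finally show ?thesis .
qed

lemma absorb_forcing_term:
  fixes a b f z w :: real
  assumes "a > 0" "b > 0"
  shows "- f * (2 * w + a * z) \<le> a / 4 * w^2 + a * b / 4 * z^2 + (4 / a + a / b) * f^2"
proof -
  have "a / 4 * (w + 4 * f / a)^2 + a * b / 4 * (z + 2 * f / b)^2
      = a / 4 * w^2 + a * b / 4 * z^2 + (4 / a + a / b) * f^2 + f * (2 * w + a * z)"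
    using assms by (simp add: power2_eq_square field_simps)
  moreover have "0 \<le> a / 4 * (w + 4 * f / a)^2 + a * b / 4 * (z + 2 * f / b)^2"
    using assms by simp
  ultimately show ?thesis by linarith
qed

lemma lyapunov_dissipation:
  assumes "a > 0" "b > 0"
  obtains \<eta> \<delta> :: real where "\<eta> > 0" "\<delta> > 0"
    "\<And>z w r f. \<bar>r\<bar> \<le> \<eta> * \<bar>z\<bar> \<Longrightarrow>
       - a * w^2 - a * b * z^2 - (r + f) * (2 * w + a * z)
         \<le> - \<delta> * lyapunov a b z w + (4 / a + a / b) * f^2"
proof
  \<comment> \<open>The small term and the Young bound for the forcing each use a quarter of the dissipation
    \<open>a w^2 + a b z^2\<close>; \<open>\<delta>\<close> is chosen so that \<open>\<delta> V\<close> fits into the remaining half.\<close>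
  define \<eta> where "\<eta> = min (a / 4) (a * b / (4 * (1 + a)))"
  define \<delta> where "\<delta> = min (a / (2 + a)) (a * b / (2 * b + a^2 + a))"
  have den: "2 * b + a^2 + a > 0" using assms by (simp add: add_pos_pos)
  show "\<eta> > 0" "\<delta> > 0" unfolding \<eta>_def \<delta>_def using assms den by auto
  have \<eta>1: "\<eta> \<le> a / 4" unfolding \<eta>_def by (rule min.cobounded1)
  have \<eta>2: "\<eta> * (1 + a) \<le> a * b / 4"
    using min.cobounded2[of "a / 4" "a * b / (4 * (1 + a))"] assms
    unfolding \<eta>_def by (simp add: le_divide_eq algebra_simps)
  have \<delta>1: "\<delta> * (1 + a / 2) \<le> a / 2"
    using min.cobounded1[of "a / (2 + a)" "a * b / (2 * b + a^2 + a)"] assms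
    unfolding \<delta>_def by (simp add: le_divide_eq field_simps)
  have \<delta>2: "\<delta> * (b + a^2 / 2 + a / 2) \<le> a * b / 2"
    using min.cobounded2[of "a / (2 + a)" "a * b / (2 * b + a^2 + a)"] den
    unfolding \<delta>_def by (simp add: le_divide_eq field_simps)
  fix z w r f :: real
  assume "\<bar>r\<bar> \<le> \<eta> * \<bar>z\<bar>"
  with absorb_small_term[OF assms(1) _ \<eta>1 \<eta>2] \<open>\<eta> > 0\<close>
  have r: "- r * (2 * w + a * z) \<le> a / 4 * w^2 + a * b / 4 * z^2" by simp
  have "\<delta> * lyapunov a b z w \<le> \<delta> * ((1 + a / 2) * w^2 + (b + a^2 / 2 + a / 2) * z^2)"
    using lyapunov_le_quadratic[of a b z w] assms \<open>\<delta> > 0\<close> by (intro mult_left_mono) auto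
  also have "\<dots> = \<delta> * (1 + a / 2) * w^2 + \<delta> * (b + a^2 / 2 + a / 2) * z^2"
    by (simp add: algebra_simps)
  also have "\<dots> \<le> a / 2 * w^2 + a * b / 2 * z^2"
    using \<delta>1 \<delta>2 by (intro add_mono mult_right_mono) auto
  finally show "- a * w^2 - a * b * z^2 - (r + f) * (2 * w + a * z)
      \<le> - \<delta> * lyapunov a b z w + (4 / a + a / b) * f^2"
    using r absorb_forcing_term[OF assms, of f w z] by (simp add: algebra_simps)
qed

lemma perturbed_damped_oscillator_bigo:
  fixes z z' z'' r f :: "real \<Rightarrow> real" and a b l :: real
  assumes "a > 0" "b > 0" "l > 0"
    and deriv: "\<forall>\<^sub>F t in at_bot.
      (z has_real_derivative z' t) (at t) \<and> (z' has_real_derivative z'' t) (at t)"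
    and ode: "\<forall>\<^sub>F t in at_bot. z'' t + a * z' t + b * z t + r t + f t = 0"
    and "(z \<longlongrightarrow> 0) at_bot" "r \<in> o[at_bot](z)" "f \<in> O[at_bot](\<lambda>t. exp (l * t))"
  shows "z \<in> O[at_bot](\<lambda>t. exp (l * t))"
proof -
  obtain \<eta> \<delta> where "\<eta> > 0" "\<delta> > 0" and dissipation: "\<And>z w r f. \<bar>r\<bar> \<le> \<eta> * \<bar>z\<bar> \<Longrightarrow>
      - a * w^2 - a * b * z^2 - (r + f) * (2 * w + a * z) \<le> - \<delta> * lyapunov a b z w + (4 / a + a / b) * f^2"
    using lyapunov_dissipation[OF assms(1,2)] by blast
  obtain C where f_bound: "\<forall>\<^sub>F t in at_bot. \<bar>f t\<bar> \<le> C * exp (l * t)"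
    using assms(8) by (auto elim!: landau_o.bigE)
  have r_bound: "\<forall>\<^sub>F t in at_bot. \<bar>r t\<bar> \<le> \<eta> * \<bar>z t\<bar>"
    using landau_o.smallD[OF assms(7) \<open>\<eta> > 0\<close>] by simp
  define V where "V t = lyapunov a b (z t) (z' t)" for t
  define V' where "V' t = - a * z' t^2 - a * b * z t^2 - (r t + f t) * (2 * z' t + a * z t)" for t
  define K where "K = (4 / a + a / b) * C^2"
  have "\<forall>\<^sub>F t in at_bot. (V has_real_derivative V' t) (at t) \<and>
      V' t \<le> - \<delta> * V t + K * exp ((2 * l) * t)"
    using deriv ode f_bound r_bound
  proof eventually_elim
    case (elim t)
    have "f t^2 \<le> (C * exp (l * t))^2"
      using elim(3) by (metis abs_ge_zero power2_abs power_mono)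
    also have "\<dots> = C^2 * exp ((2 * l) * t)"
      by (simp add: power_mult_distrib mult.assoc exp_double[symmetric])
    finally have "(4 / a + a / b) * f t^2 \<le> K * exp ((2 * l) * t)"
      unfolding K_def mult.assoc using assms(1,2) by (intro mult_left_mono) auto
    with dissipation[OF elim(4), of "z' t" "f t"] have bound: "V' t \<le> - \<delta> * V t + K * exp ((2 * l) * t)"
      unfolding V_def V'_def by linarith
    have sum: "z'' t + a * z' t + b * z t = - (r t + f t)" using elim(2) by linarith
    have "V' t = - a * z' t^2 - a * b * z t^2 + (z'' t + a * z' t + b * z t) * (2 * z' t + a * z t)"
      unfolding V'_def sum by (simp add: algebra_simps)
    then have "(V has_real_derivative V' t) (at t)"
      using lyapunov_has_real_derivative[of z z' t z'' a b] elim(1) unfolding V_def[abs_def] by simp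
    with bound show ?case by blast
  qed
  moreover have "\<exists>\<^sub>F t in at_bot. V t \<le> 1 + a + b + a^2 / 2"
  proof -
    have "\<forall>\<^sub>F t in at_bot. \<bar>z t\<bar> \<le> 1"
      using tendstoD[OF assms(6), of 1] by (auto elim: eventually_mono)
    moreover have "\<exists>\<^sub>F t in at_bot. \<bar>z' t\<bar> \<le> 1"
      using deriv by (intro frequently_small_derivative[OF assms(6) _ zero_less_one])
        (auto elim: eventually_mono)
    ultimately have "\<exists>\<^sub>F t in at_bot. \<bar>z' t\<bar> \<le> 1 \<and> \<bar>z t\<bar> \<le> 1"
      by (rule frequently_eventually_frequently[rotated])
    then show ?thesis
      unfolding V_def using assms(1,2) by (auto elim!: frequently_elim1 intro: lyapunov_le_of_abs_le_1)
  qed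
  ultimately have V_bound: "\<forall>\<^sub>F t in at_bot. V t \<le> K / (\<delta> + 2 * l) * exp ((2 * l) * t)"
    using \<open>\<delta> > 0\<close> assms(1-3) by (intro differential_inequality_exp_bound) (auto simp: K_def)
  show ?thesis
  proof (rule bigoI)
    show "\<forall>\<^sub>F t in at_bot. norm (z t) \<le> sqrt (K / (\<delta> + 2 * l) / b) * norm (exp (l * t))"
      using V_bound
    proof eventually_elim
      case (elim t)
      have "b * z t^2 \<le> K / (\<delta> + 2 * l) * exp (l * t)^2"
        using lyapunov_ge[of b "z t" a "z' t"] elim unfolding V_def
        by (simp add: exp_double[symmetric] mult.assoc)
      then have "b * z t^2 / b \<le> K / (\<delta> + 2 * l) * exp (l * t)^2 / b"
        using assms(2) by (intro divide_right_mono) auto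
      then have "z t^2 \<le> (K / (\<delta> + 2 * l) / b) * exp (l * t)^2"
        using assms(2) by simp
      then have "sqrt (z t^2) \<le> sqrt (K / (\<delta> + 2 * l) / b * exp (l * t)^2)"
        by (rule real_sqrt_le_mono)
      then show ?case unfolding real_sqrt_mult by simp
    qed
  qed
qed

lemma supercritical_constants:
  assumes "N \<ge> 3" "p > pS N"
  shows "p > 1" "mconst N p > 0" "alpha N p > 0"
proof -
  have "real N - 2 > 0" using assms(1) by simp
  then have hp: "p * (real N - 2) > real N + 2"
    using assms(2) unfolding pS_def by (simp add: divide_less_eq)
  show "p > 1"
  proof (rule ccontr)
    assume "\<not> p > 1"
    with \<open>real N - 2 > 0\<close> have "p * (real N - 2) \<le> 1 * (real N - 2)"
      by (intro mult_right_mono) auto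
    with hp show False by simp
  qed
  then have mu_pos: "mu p > 0" unfolding mu_def by simp
  have "2 * mu p = 4 / (p - 1)" unfolding mu_def by simp
  also have "\<dots> < real N - 2"
  proof -
    have "(p - 1) * (real N - 2) > 4" using hp by (simp add: algebra_simps)
    then show ?thesis using \<open>p > 1\<close> by (simp add: divide_less_eq mult.commute)
  qed
  finally have mu_lt: "2 * mu p < real N - 2" .
  then have "aconst N p > 0"
    using mu_pos unfolding aconst_def by simp
  then show m_pos: "mconst N p > 0" unfolding mconst_def by simp
  with mu_lt show "alpha N p > 0" unfolding alpha_def by simp
qed

lemma B0_bigo:
  assumes "mconst N p > 0"
  shows "B0 N p \<in> O[at_bot](\<lambda>t. exp (2 * mconst N p * t))"
proof -
  have "(\<lambda>t. (1 + exp (2 * m * t)) powr q - 1) \<in> O[at_bot](\<lambda>t. exp (2 * m * t))"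
    if "m > 0" for m q :: real
    using that by real_asymp
  from this[OF assms] show ?thesis unfolding B0_def[abs_def] .
qed

lemma B1_bigo:
  assumes "mconst N p > 0"
  shows "B1 N p \<in> O[at_bot](\<lambda>t. exp (2 * mconst N p * t))"
proof -
  have "(\<lambda>t. c * exp (2 * m * t) / (1 + exp (2 * m * t))^2) \<in> O[at_bot](\<lambda>t. exp (2 * m * t))"
    if "m > 0" for m c :: real
    using that by real_asymp
  from this[OF assms] show ?thesis unfolding B1_def[abs_def] .
qed

lemma forcing_bigo:
  assumes "mconst N p > 0" "(y \<longlongrightarrow> 1) at_bot"
  shows "(\<lambda>t. B0 N p t * y t powr p + B1 N p t * y t) \<in> O[at_bot](\<lambda>t. exp (2 * mconst N p * t))"
proof -
  have "(\<lambda>t. y t powr p) \<in> O[at_bot](\<lambda>_. 1)"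
    using tendsto_powr[OF assms(2) tendsto_const] by (intro convergent_bigo_1) simp
  moreover have "y \<in> O[at_bot](\<lambda>_. 1)" using assms(2) by (rule convergent_bigo_1)
  ultimately show ?thesis
    by (intro sum_in_bigo landau_o.big_1_mult B0_bigo B1_bigo assms(1))
qed

theorem lemma4p1:
  fixes N :: nat and p T :: real and y y' y'' :: "real \<Rightarrow> real"
  assumes "N \<ge> 3"
    and "p > pS N"
    and "\<And>t. t \<le> T \<Longrightarrow> (y has_real_derivative y' t) (at t within {..T})"
    and "\<And>t. t \<le> T \<Longrightarrow> (y' has_real_derivative y'' t) (at t within {..T})"
    and "\<And>t. t \<le> T \<Longrightarrow>
           y'' t + alpha N p * y' t - y t + y t powr p
           + B0 N p t * y t powr p + B1 N p t * y t = 0"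
    and "(y \<longlongrightarrow> 1) at_bot"
  shows "(\<lambda>t. y t - 1) \<in> O[at_bot](\<lambda>t. exp (2 * mconst N p * t))"
proof -
  note constants = supercritical_constants[OF assms(1,2)]
  have "\<forall>\<^sub>F t in at_bot. (y has_real_derivative y' t) (at t)"
    by (rule eventually_has_real_derivative_at) (rule assms(3))
  moreover have "\<forall>\<^sub>F t in at_bot. (y' has_real_derivative y'' t) (at t)"
    by (rule eventually_has_real_derivative_at) (rule assms(4))
  ultimately have deriv: "\<forall>\<^sub>F t in at_bot. ((\<lambda>t. y t - 1) has_real_derivative y' t) (at t)
      \<and> (y' has_real_derivative y'' t) (at t)"
    by eventually_elim (auto intro!: derivative_eq_intros)
  have ode: "\<forall>\<^sub>F t in at_bot. y'' t + alpha N p * y' t + (p - 1) * (y t - 1)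
      + (y t powr p - 1 - p * (y t - 1)) + (B0 N p t * y t powr p + B1 N p t * y t) = 0"
    by (rule eventually_at_bot_linorderI) (use assms(5) in \<open>simp add: algebra_simps\<close>)
  have "((\<lambda>t. y t - 1) \<longlongrightarrow> 0) at_bot"
    using tendsto_diff[OF assms(6) tendsto_const[of 1]] by simp
  from perturbed_damped_oscillator_bigo[OF _ _ _ deriv ode this
      powr_linearization_smallo[OF assms(6)] forcing_bigo[OF _ assms(6)]]
  show ?thesis using constants by simp
qed

end
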